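(* Let $\mathbb{D}$ be a division ring, let $2\le m,n<\infty$, let $P$ be an $n\times m$ matrix over $\mathbb{D}$ with $\operatorname{rank}P = r$, and let $\mathcal{A}=\mathfrak{M}(\mathbb{D}, m, n, P)$. Then: (1) if $r\ge 1$, then $\mathcal{A}$ is generated by its idempotents as a $\mathbb{D}$-algebra; (2) if $r\ge 2$, then $\mathcal{A}$ is generated by its idempotents as a ring; (3) if $r\ge 2$ and $\operatorname{char}\mathbb{D}\ne 2$, then $\mathcal{A}$ is additively spanned by Jordan products of idempotents, i.e. $\mathcal{A}$ equals the additive subgroup generated by all elements $e\circ f = e\bullet f + f\bullet e$ with $e,f\in\mathcal{A}$ idempotents.
   Context: $\mathfrak{M}(\mathbb{D}, m, n, P)$ denotes the set of all $m\times n$ matrices over the division ring $\mathbb{D}$, with entrywise addition, multiplication $A\bullet B = APB$, and (left) scalar multiplication by elements of $\mathbb{D}$ entrywise. An element $e$ is an idempotent if $e\bullet e = e$. *)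

theory Defs
  imports "HOL-Analysis.Analysis"
begin

text \<open>Matrices over a division ring 'a: an m x n matrix is an element of 'a^'n^'m
 (rows indexed by 'm, columns by 'n).  The sandwich product A \<bullet> B = A P B
 for P an n x m matrix.\<close>

definition sandwich_mult :: "('a::division_ring)^'m^'n \<Rightarrow> 'a^'n^'m \<Rightarrow> 'a^'n^'m \<Rightarrow> 'a^'n^'m" where
  "sandwich_mult P A B = A ** P ** B"

definition lsmult :: "'a::division_ring \<Rightarrow> 'a^'n^'m \<Rightarrow> 'a^'n^'m" where
  "lsmult c A = (\<chi> i j. c * A $ i $ j)"

definition sandwich_idempotent :: "('a::division_ring)^'m^'n \<Rightarrow> 'a^'n^'m \<Rightarrow> bool" where
  "sandwich_idempotent P e \<longleftrightarrow> sandwich_mult P e e = e"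

definition idempotents :: "('a::division_ring)^'m^'n \<Rightarrow> ('a^'n^'m) set" where
  "idempotents P = {e. sandwich_idempotent P e}"

definition left_indep_rows :: "('a::division_ring)^'c^'r \<Rightarrow> 'r set \<Rightarrow> bool" where
  "left_indep_rows M I \<longleftrightarrow>
     (\<forall>c::'r \<Rightarrow> 'a. (\<forall>j. (\<Sum>i\<in>I. c i * M $ i $ j) = 0) \<longrightarrow> (\<forall>i\<in>I. c i = 0))"

definition mat_rank :: "('a::division_ring)^'c^'r \<Rightarrow> nat" where
  "mat_rank M = Max (card ` {I :: 'r set. left_indep_rows M I})"

inductive_set alg_generated :: "('a::division_ring)^'m^'n \<Rightarrow> ('a^'n^'m) set \<Rightarrow> ('a^'n^'m) set"
  for P S where
  base: "x \<in> S \<Longrightarrow> x \<in> alg_generated P S"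
| zero: "0 \<in> alg_generated P S"
| add: "x \<in> alg_generated P S \<Longrightarrow> y \<in> alg_generated P S \<Longrightarrow> x + y \<in> alg_generated P S"
| smult: "x \<in> alg_generated P S \<Longrightarrow> lsmult c x \<in> alg_generated P S"
| mult: "x \<in> alg_generated P S \<Longrightarrow> y \<in> alg_generated P S \<Longrightarrow> sandwich_mult P x y \<in> alg_generated P S"

inductive_set ring_generated :: "('a::division_ring)^'m^'n \<Rightarrow> ('a^'n^'m) set \<Rightarrow> ('a^'n^'m) set"
  for P S where
  base: "x \<in> S \<Longrightarrow> x \<in> ring_generated P S"
| zero: "0 \<in> ring_generated P S"
| add: "x \<in> ring_generated P S \<Longrightarrow> y \<in> ring_generated P S \<Longrightarrow> x + y \<in> ring_generated P S"
| neg: "x \<in> ring_generated P S \<Longrightarrow> - x \<in> ring_generated P S"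
| mult: "x \<in> ring_generated P S \<Longrightarrow> y \<in> ring_generated P S \<Longrightarrow> sandwich_mult P x y \<in> ring_generated P S"

inductive_set add_generated :: "('b::ab_group_add) set \<Rightarrow> 'b set" for S where
  base: "x \<in> S \<Longrightarrow> x \<in> add_generated S"
| zero: "0 \<in> add_generated S"
| add: "x \<in> add_generated S \<Longrightarrow> y \<in> add_generated S \<Longrightarrow> x + y \<in> add_generated S"
| neg: "x \<in> add_generated S \<Longrightarrow> - x \<in> add_generated S"

definition jordan_prod :: "('a::division_ring)^'m^'n \<Rightarrow> 'a^'n^'m \<Rightarrow> 'a^'n^'m \<Rightarrow> 'a^'n^'m" where
  "jordan_prod P e f = sandwich_mult P e f + sandwich_mult P f e"

end

theory Submission
  imports Defs
begin

(*
  Write u v^T for the rank-one matrix outer u v and <v, u> = v^T P u for pairing P v u.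
  Then (u v^T) P (u' v'^T) = u (<v, u'> v')^T, so u v^T is idempotent whenever <v, u> = 1.
  As soon as P is nonzero there are w, e with <w, e> = 1; put E = e w^T.  Relative to E every
  rank-one matrix splits into four Peirce components: u w^T and e v^T with <w, u> = <v, e> = 0
  are differences of the idempotents (e + u) w^T, e (w + v)^T and E, and u v^T is the product
  (u w^T) P (e v^T).  The corner e (c w)^T is a scalar multiple of E when e is a coordinate
  vector, which settles (1).  If rank P >= 2 there are such u, v with <v, u> /= 0, and then
  e (c w)^T = (e (c <v, u>^-1 v)^T) P (u w^T), which settles (2).  Jordan products of E with
  idempotents of the same kind produce all four components as well, the corner only twice,
  hence the hypothesis 2 /= 0 in (3).
*)

definition outer :: "('a::times)^'m \<Rightarrow> 'a^'n \<Rightarrow> 'a^'n^'m" where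
  "outer u v = (\<chi> k l. u$k * v$l)"

definition pairing :: "('a::division_ring)^'m^'n \<Rightarrow> 'a^'n \<Rightarrow> 'a^'m \<Rightarrow> 'a" where
  "pairing P v u = (\<Sum>i\<in>UNIV. \<Sum>j\<in>UNIV. v$i * P$i$j * u$j)"

lemma outer_add_left: "outer (u + u') v = outer u v + outer u' (v::('a::ring)^'n)"
  by (simp add: outer_def vec_eq_iff distrib_right)

lemma outer_add_right: "outer u (v + v') = outer u v + outer (u::('a::ring)^'m) v'"
  by (simp add: outer_def vec_eq_iff distrib_left)

lemma outer_mult_vec_left: "outer (u * vec c) v = outer u (c *s (v::('a::ring)^'n))"
  by (simp add: outer_def times_vec_def vec_eq_iff mult.assoc)

lemma lsmult_outer_axis: "lsmult c (outer (axis j 1) v) = outer (axis j 1) (c *s v)"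
  by (simp add: lsmult_def outer_def axis_def vec_eq_iff)

lemma lsmult_minus_one: "lsmult (-1) x = - x"
  by (simp add: lsmult_def vec_eq_iff)

lemma pairing_add_left: "pairing P (v + v') u = pairing P v u + pairing P v' u"
  by (simp add: pairing_def distrib_right sum.distrib)

lemma pairing_add_right: "pairing P v (u + u') = pairing P v u + pairing P v u'"
  by (simp add: pairing_def distrib_left sum.distrib)

lemma pairing_diff_left: "pairing P (v - v') u = pairing P v u - pairing P v' u"
  by (simp add: pairing_def left_diff_distrib sum_subtractf)

lemma pairing_diff_right: "pairing P v (u - u') = pairing P v u - pairing P v u'"
  by (simp add: pairing_def right_diff_distrib sum_subtractf)

lemma pairing_smult_left: "pairing P (c *s v) u = c * pairing P v u"
  by (simp add: pairing_def sum_distrib_left mult.assoc)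

lemma pairing_mult_vec_right: "pairing P v (u * vec c) = pairing P v u * c"
  by (simp add: pairing_def times_vec_def sum_distrib_right mult.assoc)

lemma pairing_axis_axis: "pairing P (axis i a) (axis j b) = a * P$i$j * b"
  unfolding pairing_def axis_def
  by (simp add: if_distrib[of "\<lambda>x. x * _"] if_distrib[of "\<lambda>x. _ * x"] cong: if_cong)

lemma sandwich_mult_outer:
  "sandwich_mult P (outer u v) (outer u' v') = outer u (pairing P v u' *s v')"
proof -
  have "(\<Sum>y\<in>UNIV. (\<Sum>x\<in>UNIV. u$k * v$x * P$x$y) * (u'$y * v'$l))
      = u$k * (pairing P v u' * v'$l)" for k l
  proof -
    have "(\<Sum>y\<in>UNIV. (\<Sum>x\<in>UNIV. u$k * v$x * P$x$y) * (u'$y * v'$l))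
        = (\<Sum>y\<in>UNIV. \<Sum>x\<in>UNIV. u$k * (v$x * P$x$y * u'$y * v'$l))"
      by (simp add: sum_distrib_right mult.assoc)
    also have "\<dots> = (\<Sum>x\<in>UNIV. \<Sum>y\<in>UNIV. u$k * (v$x * P$x$y * u'$y * v'$l))"
      by (rule sum.swap)
    also have "\<dots> = u$k * (pairing P v u' * v'$l)"
      by (simp add: pairing_def sum_distrib_left sum_distrib_right)
    finally show ?thesis .
  qed
  then show ?thesis
    by (simp add: sandwich_mult_def matrix_matrix_mult_def outer_def vec_eq_iff)
qed

lemma outer_mem_idempotents: "pairing P v u = 1 \<Longrightarrow> outer u v \<in> idempotents P"
  by (simp add: idempotents_def sandwich_idempotent_def sandwich_mult_outer)

lemma zero_mem_idempotents: "0 \<in> idempotents P"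
  by (simp add: idempotents_def sandwich_idempotent_def sandwich_mult_def)

lemma matrix_eq_sum_outer_axis:
  "X = (\<Sum>k\<in>UNIV. \<Sum>l\<in>UNIV. outer (axis k (X$k$l)) (axis l (1::'a::ring_1)))"
  by (simp add: vec_eq_iff outer_def axis_def if_distrib[of "\<lambda>x. x * _"] if_distrib[of "\<lambda>x. _ * x"]
      cong: if_cong)

lemma eq_UNIV_if_outer_mem:
  assumes add: "\<And>x y. x \<in> G \<Longrightarrow> y \<in> G \<Longrightarrow> x + y \<in> G" and "0 \<in> G"
    and outer: "\<And>u v. outer u v \<in> G"
  shows "G = (UNIV :: ('a::ring_1^'n^'m) set)"
proof -
  have sum_mem: "sum f S \<in> G" if "\<And>x. f x \<in> G" for f and S :: "'b set"
    using that by (induction S rule: infinite_finite_induct) (simp_all add: \<open>0 \<in> G\<close> add)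
  have "X \<in> G" for X
    by (subst matrix_eq_sum_outer_axis) (intro sum_mem outer)
  then show ?thesis by blast
qed

lemma eq_UNIV_if_peirce_parts_mem:
  fixes P :: "('a::division_ring)^'m^'n" and G :: "('a^'n^'m) set"
  assumes add: "\<And>x y. x \<in> G \<Longrightarrow> y \<in> G \<Longrightarrow> x + y \<in> G" and zero: "0 \<in> G"
    and frame: "pairing P w e = 1"
    and left: "\<And>u. pairing P w u = 0 \<Longrightarrow> outer u w \<in> G"
    and right: "\<And>v. pairing P v e = 0 \<Longrightarrow> outer e v \<in> G"
    and off: "\<And>u v. pairing P w u = 0 \<Longrightarrow> pairing P v e = 0 \<Longrightarrow> outer u v \<in> G"
    and corner: "\<And>c. outer e (c *s w) \<in> G"
  shows "G = UNIV"
proof (rule eq_UNIV_if_outer_mem[OF add zero])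
  fix u v
  define \<alpha> \<beta> where "\<alpha> = pairing P w u" and "\<beta> = pairing P v e"
  define u' v' where "u' = u - e * vec \<alpha>" and "v' = v - \<beta> *s w"
  have u': "pairing P w u' = 0"
    by (simp add: u'_def \<alpha>_def pairing_diff_right pairing_mult_vec_right frame)
  have v': "pairing P v' e = 0"
    by (simp add: v'_def \<beta>_def pairing_diff_left pairing_smult_left frame)
  have "outer u v = outer (u' + e * vec \<alpha>) (v' + \<beta> *s w)"
    by (simp add: u'_def v'_def)
  also have "\<dots> = outer u' v' + outer (u' * vec \<beta>) w + outer e (\<alpha> *s v') + outer e ((\<alpha> * \<beta>) *s w)"
    by (simp add: outer_add_left outer_add_right outer_mult_vec_left vector_smult_assoc add_ac)
  finally show "outer u v \<in> G"
    using off[OF u' v'] left[of "u' * vec \<beta>"] right[of "\<alpha> *s v'"] corner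
    by (simp add: add pairing_mult_vec_right pairing_smult_left u' v')
qed

locale idempotent_closed_subring =
  fixes P :: "('a::division_ring)^'m::finite^'n::finite" and G :: "('a^'n^'m) set"
  assumes idempotents_subset: "idempotents P \<subseteq> G"
    and add_mem: "x \<in> G \<Longrightarrow> y \<in> G \<Longrightarrow> x + y \<in> G"
    and uminus_mem: "x \<in> G \<Longrightarrow> - x \<in> G"
    and sandwich_mult_mem: "x \<in> G \<Longrightarrow> y \<in> G \<Longrightarrow> sandwich_mult P x y \<in> G"
begin

lemma diff_mem: "x \<in> G \<Longrightarrow> y \<in> G \<Longrightarrow> x - y \<in> G"
  by (metis add_mem uminus_mem diff_conv_add_uminus)

lemma outer_mem: "pairing P v u = 1 \<Longrightarrow> outer u v \<in> G"
  using idempotents_subset outer_mem_idempotents by blast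

lemma outer_left_mem:
  assumes frame: "pairing P w e = 1" and u: "pairing P w u = 0"
  shows "outer u w \<in> G"
proof -
  have "outer u w = outer (e + u) w - outer e w"
    by (simp add: outer_add_left)
  then show ?thesis
    by (simp add: diff_mem outer_mem pairing_add_right frame u)
qed

lemma outer_right_mem:
  assumes frame: "pairing P w e = 1" and v: "pairing P v e = 0"
  shows "outer e v \<in> G"
proof -
  have "outer e v = outer e (w + v) - outer e w"
    by (simp add: outer_add_right)
  then show ?thesis
    by (simp add: diff_mem outer_mem pairing_add_left frame v)
qed

lemma outer_off_mem:
  assumes frame: "pairing P w e = 1" and u: "pairing P w u = 0" and v: "pairing P v e = 0"
  shows "outer u v \<in> G"
proof -
  have "outer u v = sandwich_mult P (outer u w) (outer e v)"
    by (simp add: sandwich_mult_outer frame)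
  then show ?thesis
    by (simp add: sandwich_mult_mem outer_left_mem[OF frame u] outer_right_mem[OF frame v])
qed

lemma eq_UNIV_if_corner:
  assumes frame: "pairing P w e = 1" and corner: "\<And>c. outer e (c *s w) \<in> G"
  shows "G = UNIV"
  using add_mem idempotents_subset zero_mem_idempotents frame
    outer_left_mem[OF frame] outer_right_mem[OF frame] outer_off_mem[OF frame] corner
  by (intro eq_UNIV_if_peirce_parts_mem[of G P w e]) blast+

lemma eq_UNIV_if_nondegenerate:
  assumes frame: "pairing P w e = 1" and u: "pairing P w u = 0" and v: "pairing P v e = 0"
    and uv: "pairing P v u \<noteq> 0"
  shows "G = UNIV"
proof (rule eq_UNIV_if_corner[OF frame])
  fix c
  define v' where "v' = (c * inverse (pairing P v u)) *s v"
  have "outer e (c *s w) = sandwich_mult P (outer e v') (outer u w)"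
    using uv by (simp add: v'_def sandwich_mult_outer pairing_smult_left mult.assoc)
  moreover have "pairing P v' e = 0"
    by (simp add: v'_def pairing_smult_left v)
  ultimately show "outer e (c *s w) \<in> G"
    by (simp add: sandwich_mult_mem outer_left_mem[OF frame u] outer_right_mem[OF frame])
qed

end

lemma alg_generated_idempotents_eq_UNIV:
  assumes frame: "pairing P w (axis j 1) = 1"
  shows "alg_generated P (idempotents P) = UNIV"
proof -
  interpret idempotent_closed_subring P "alg_generated P (idempotents P)"
    by unfold_locales (auto intro: alg_generated.intros simp flip: lsmult_minus_one)
  show ?thesis
  proof (rule eq_UNIV_if_corner[OF frame])
    fix c
    have "outer (axis j 1) w \<in> alg_generated P (idempotents P)"
      by (rule outer_mem[OF frame])
    from alg_generated.smult[OF this, of c]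
    show "outer (axis j 1) (c *s w) \<in> alg_generated P (idempotents P)"
      by (simp add: lsmult_outer_axis)
  qed
qed

lemma ring_generated_idempotents_eq_UNIV:
  assumes "pairing P w e = 1" "pairing P w u = 0" "pairing P v e = 0" "pairing P v u \<noteq> 0"
  shows "ring_generated P (idempotents P) = UNIV"
proof -
  interpret idempotent_closed_subring P "ring_generated P (idempotents P)"
    by unfold_locales (auto intro: ring_generated.intros)
  from assms show ?thesis
    by (rule eq_UNIV_if_nondegenerate)
qed

abbreviation jordan_span :: "('a::division_ring)^'m^'n \<Rightarrow> ('a^'n^'m) set" where
  "jordan_span P \<equiv> add_generated {jordan_prod P e f | e f. e \<in> idempotents P \<and> f \<in> idempotents P}"

lemma add_generated_diff: "x \<in> add_generated S \<Longrightarrow> y \<in> add_generated S \<Longrightarrow> x - y \<in> add_generated S"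
  by (metis add_generated.add add_generated.neg diff_conv_add_uminus)

lemma jordan_prod_mem_jordan_span:
  "e \<in> idempotents P \<Longrightarrow> f \<in> idempotents P \<Longrightarrow> jordan_prod P e f \<in> jordan_span P"
  by (blast intro: add_generated.base)

lemma outer_left_mem_jordan_span:
  assumes frame: "pairing P w e = 1" and u: "pairing P w u = 0"
  shows "outer u w \<in> jordan_span P"
proof -
  have "outer u w = jordan_prod P (outer e w) (outer (e + u) w) - jordan_prod P (outer e w) (outer e w)"
    by (simp add: jordan_prod_def sandwich_mult_outer pairing_add_right frame u) (simp add: outer_add_left)
  then show ?thesis
    by (simp add: add_generated_diff jordan_prod_mem_jordan_span outer_mem_idempotents
        pairing_add_right frame u)
qed

lemma outer_right_mem_jordan_span:
  assumes frame: "pairing P w e = 1" and v: "pairing P v e = 0"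
  shows "outer e v \<in> jordan_span P"
proof -
  have "outer e v = jordan_prod P (outer e w) (outer e (w + v)) - jordan_prod P (outer e w) (outer e w)"
    by (simp add: jordan_prod_def sandwich_mult_outer pairing_add_left frame v) (simp add: outer_add_right)
  then show ?thesis
    by (simp add: add_generated_diff jordan_prod_mem_jordan_span outer_mem_idempotents
        pairing_add_left frame v)
qed

lemma double_corner_mem_jordan_span:
  assumes frame: "pairing P w e = 1" and u: "pairing P w u = 0" and v: "pairing P v e = 0"
    and uv: "pairing P v u \<noteq> 0"
  shows "outer e (c *s w) + outer e (c *s w) \<in> jordan_span P"
proof -
  define \<gamma> where "\<gamma> = (1 - c) * inverse (pairing P v u)"
  define u' v' where "u' = e * vec c + u" and "v' = w + \<gamma> *s v"
  have wu': "pairing P w u' = c"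
    by (simp add: u'_def pairing_add_right pairing_mult_vec_right frame u)
  have v'e: "pairing P v' e = 1"
    by (simp add: v'_def pairing_add_left pairing_smult_left frame v)
  have "pairing P v' u' = c + \<gamma> * pairing P v u"
    by (simp add: u'_def v'_def pairing_add_left pairing_add_right pairing_smult_left
        pairing_mult_vec_right frame u v)
  then have "pairing P v' u' = 1"
    using uv by (simp add: \<gamma>_def mult.assoc)
  then have idem: "outer u' v' \<in> idempotents P"
    by (rule outer_mem_idempotents)
  have "jordan_prod P (outer e w) (outer u' v') = outer e (c *s v') + outer u' w"
    by (simp add: jordan_prod_def sandwich_mult_outer wu' v'e)
  also have "\<dots> = (outer e (c *s w) + outer e (c *s w)) + (outer e ((c * \<gamma>) *s v) + outer u w)"
    by (simp add: u'_def v'_def vector_add_ldistrib vector_smult_assoc outer_add_left outer_add_right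
        outer_mult_vec_left add_ac)
  finally have "outer e (c *s w) + outer e (c *s w)
      = jordan_prod P (outer e w) (outer u' v') - (outer e ((c * \<gamma>) *s v) + outer u w)"
    by (simp add: algebra_simps)
  then show ?thesis
    by (simp add: add_generated_diff add_generated.add jordan_prod_mem_jordan_span idem
        outer_mem_idempotents frame outer_left_mem_jordan_span[OF frame u]
        outer_right_mem_jordan_span[OF frame] pairing_smult_left v)
qed

lemma corner_mem_jordan_span:
  fixes P :: "('a::division_ring)^'m^'n"
  assumes "pairing P w e = 1" "pairing P w u = 0" "pairing P v e = 0" "pairing P v u \<noteq> 0"
    and two: "(2::'a) \<noteq> 0"
  shows "outer e (c *s w) \<in> jordan_span P"
proof -
  have "inverse 2 * c + inverse 2 * c = c"
    using two by (metis mult_2 distrib_right right_inverse mult_1_left)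
  then have "outer e (c *s w) = outer e ((inverse 2 * c) *s w) + outer e ((inverse 2 * c) *s w)"
    by (metis outer_add_right vector_sadd_rdistrib)
  then show ?thesis
    using double_corner_mem_jordan_span[OF assms(1-4)] by simp
qed

lemma outer_off_mem_jordan_span:
  assumes frame: "pairing P w e = 1" and u: "pairing P w u = 0" and v: "pairing P v e = 0"
    and corner: "\<And>c. outer e (c *s w) \<in> jordan_span P"
  shows "outer u v \<in> jordan_span P"
proof -
  let ?E = "outer e w" and ?F = "outer (e + u) w" and ?G = "outer e (w + v)"
  have "sandwich_mult P ?F ?G = ?E + outer e v + outer u w + outer u v"
    unfolding sandwich_mult_outer by (simp add: frame outer_add_left outer_add_right add_ac)
  moreover have "sandwich_mult P ?G ?F = ?E + outer e (pairing P v u *s w)"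
    unfolding sandwich_mult_outer
    by (simp add: pairing_add_left pairing_add_right frame u v vector_sadd_rdistrib outer_add_right)
  ultimately have "outer u v = jordan_prod P ?F ?G - jordan_prod P ?E ?E
      - outer e v - outer u w - outer e (pairing P v u *s w)"
    by (simp add: jordan_prod_def sandwich_mult_outer frame algebra_simps)
  then show ?thesis
    by (simp add: add_generated_diff jordan_prod_mem_jordan_span outer_mem_idempotents
        pairing_add_left pairing_add_right frame u v corner
        outer_left_mem_jordan_span[OF frame u] outer_right_mem_jordan_span[OF frame v])
qed

lemma jordan_span_eq_UNIV:
  fixes P :: "('a::division_ring)^'m^'n"
  assumes frame: "pairing P w e = 1" and "pairing P w u = 0" "pairing P v e = 0"
    "pairing P v u \<noteq> 0" and "(2::'a) \<noteq> 0"
  shows "jordan_span P = UNIV"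
proof -
  have corner: "outer e (c *s w) \<in> jordan_span P" for c
    using assms by (rule corner_mem_jordan_span)
  show ?thesis
    using outer_left_mem_jordan_span[OF frame] outer_right_mem_jordan_span[OF frame]
      outer_off_mem_jordan_span[OF frame _ _ corner] corner
    by (intro eq_UNIV_if_peirce_parts_mem[OF add_generated.add add_generated.zero frame]) blast+
qed

lemma mat_rank_obtains_indep_rows:
  fixes P :: "('a::division_ring)^'c::finite^'r::finite"
  assumes "k \<le> mat_rank P"
  obtains I where "left_indep_rows P I" "k \<le> card I"
proof -
  have "{} \<in> {I. left_indep_rows P I}"
    by (simp add: left_indep_rows_def)
  then have "mat_rank P \<in> card ` {I. left_indep_rows P I}"
    unfolding mat_rank_def by (intro Max_in) auto
  then show thesis
    using assms that by auto
qed

lemma left_indep_rows_nonzero_combination: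
  assumes "left_indep_rows P I" "i \<in> I" "c i \<noteq> 0"
  shows "\<exists>j. (\<Sum>x\<in>I. c x * P$x$j) \<noteq> 0"
  using assms unfolding left_indep_rows_def by blast

lemma frame_if_mat_rank_ge_1:
  fixes P :: "('a::division_ring)^'m::finite^'n::finite"
  assumes "1 \<le> mat_rank P"
  obtains w j where "pairing P w (axis j 1) = 1"
proof -
  obtain I where I: "left_indep_rows P I" "1 \<le> card I"
    using assms by (rule mat_rank_obtains_indep_rows)
  then obtain i where "i \<in> I"
    by fastforce
  from left_indep_rows_nonzero_combination[OF I(1) this, of "\<lambda>x. if x = i then 1 else 0"]
  obtain j where "P$i$j \<noteq> 0"
    using \<open>i \<in> I\<close> by (auto simp: if_distrib[of "\<lambda>x. x * _"] cong: if_cong)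
  then have "pairing P (axis i (inverse (P$i$j))) (axis j 1) = 1"
    by (simp add: pairing_axis_axis)
  then show thesis
    by (rule that)
qed

lemma pivot_if_mat_rank_ge_2:
  fixes P :: "('a::division_ring)^'c::finite^'r::finite"
  assumes "2 \<le> mat_rank P"
  obtains i0 i1 j0 j1 where "P$i0$j0 \<noteq> 0" "P$i1$j1 - P$i1$j0 * inverse (P$i0$j0) * P$i0$j1 \<noteq> 0"
proof -
  obtain I where I: "left_indep_rows P I" "2 \<le> card I"
    using assms by (rule mat_rank_obtains_indep_rows)
  obtain J where "J \<subseteq> I" "card J = 2"
    using I(2) by (rule obtain_subset_with_card_n)
  then obtain i0 i1 where i: "i0 \<in> I" "i1 \<in> I" "i0 \<noteq> i1"
    by (auto simp: card_2_iff)
  from left_indep_rows_nonzero_combination[OF I(1) i(1), of "\<lambda>x. if x = i0 then 1 else 0"]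
  obtain j0 where j0: "P$i0$j0 \<noteq> 0"
    using i by (auto simp: if_distrib[of "\<lambda>x. x * _"] cong: if_cong)
  define a where "a = P$i1$j0 * inverse (P$i0$j0)"
  define c where "c x = (if x = i1 then 1 else if x = i0 then - a else 0)" for x
  have "(\<Sum>x\<in>I. c x * P$x$j) = (\<Sum>x\<in>{i0, i1}. c x * P$x$j)" for j
    by (rule sum.mono_neutral_right) (use i in \<open>auto simp: c_def\<close>)
  then have "(\<Sum>x\<in>I. c x * P$x$j) = P$i1$j - a * P$i0$j" for j
    using i by (simp add: c_def)
  with left_indep_rows_nonzero_combination[OF I(1) i(2), of c]
  obtain j1 where "P$i1$j1 - a * P$i0$j1 \<noteq> 0"
    by (auto simp: c_def)
  with j0 show thesis
    by (intro that) (simp_all add: a_def)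
qed

lemma nondegenerate_frame_if_pivot:
  fixes P :: "('a::division_ring)^'m::finite^'n::finite"
  assumes p: "P$i0$j0 \<noteq> 0" and schur: "P$i1$j1 - P$i1$j0 * inverse (P$i0$j0) * P$i0$j1 \<noteq> 0"
  obtains w e u v where "pairing P w e = 1" "pairing P w u = 0" "pairing P v e = 0" "pairing P v u \<noteq> 0"
proof
  define p where "p = P$i0$j0"
  have "p \<noteq> 0"
    using p by (simp add: p_def)
  show "pairing P (axis i0 (inverse p)) (axis j0 1) = 1"
    using \<open>p \<noteq> 0\<close> by (simp add: pairing_axis_axis p_def)
  show "pairing P (axis i0 (inverse p)) (axis j1 1 - axis j0 (inverse p * P$i0$j1)) = 0"
    using \<open>p \<noteq> 0\<close> by (simp add: pairing_diff_right pairing_axis_axis p_def mult.assoc[symmetric])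
  show "pairing P (axis i1 1 - axis i0 (P$i1$j0 * inverse p)) (axis j0 1) = 0"
    using \<open>p \<noteq> 0\<close> by (simp add: pairing_diff_left pairing_axis_axis p_def mult.assoc)
  have "pairing P (axis i1 1 - axis i0 (P$i1$j0 * inverse p)) (axis j1 1 - axis j0 (inverse p * P$i0$j1))
      = P$i1$j1 - P$i1$j0 * inverse p * P$i0$j1"
    using \<open>p \<noteq> 0\<close>
    by (simp add: pairing_diff_left pairing_diff_right pairing_axis_axis p_def mult.assoc algebra_simps)
  with schur
  show "pairing P (axis i1 1 - axis i0 (P$i1$j0 * inverse p)) (axis j1 1 - axis j0 (inverse p * P$i0$j1)) \<noteq> 0"
    by (simp add: p_def)
qed

lemma nondegenerate_frame_if_mat_rank_ge_2:
  fixes P :: "('a::division_ring)^'m::finite^'n::finite"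
  assumes "2 \<le> mat_rank P"
  obtains w e u v where "pairing P w e = 1" "pairing P w u = 0" "pairing P v e = 0" "pairing P v u \<noteq> 0"
proof -
  obtain i0 i1 j0 j1 where "P$i0$j0 \<noteq> 0" "P$i1$j1 - P$i1$j0 * inverse (P$i0$j0) * P$i0$j1 \<noteq> 0"
    using assms by (rule pivot_if_mat_rank_ge_2)
  then show thesis
    using that by (rule nondegenerate_frame_if_pivot)
qed

theorem theorem2p2:
  fixes P :: "('a::division_ring)^'m::finite^'n::finite"
  assumes "CARD('m) \<ge> 2" and "CARD('n) \<ge> 2"
  shows "(mat_rank P \<ge> 1 \<longrightarrow> alg_generated P (idempotents P) = UNIV)
       \<and> (mat_rank P \<ge> 2 \<longrightarrow> ring_generated P (idempotents P) = UNIV)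
       \<and> (mat_rank P \<ge> 2 \<and> (2::'a) \<noteq> 0 \<longrightarrow>
            add_generated {jordan_prod P e f | e f. e \<in> idempotents P \<and> f \<in> idempotents P} = UNIV)"
proof (intro conjI impI)
  assume "1 \<le> mat_rank P"
  then obtain w j where "pairing P w (axis j 1) = 1"
    by (rule frame_if_mat_rank_ge_1)
  then show "alg_generated P (idempotents P) = UNIV"
    by (rule alg_generated_idempotents_eq_UNIV)
next
  assume "2 \<le> mat_rank P"
  then obtain w e u v where "pairing P w e = 1" "pairing P w u = 0" "pairing P v e = 0" "pairing P v u \<noteq> 0"
    by (rule nondegenerate_frame_if_mat_rank_ge_2)
  then show "ring_generated P (idempotents P) = UNIV"
    by (rule ring_generated_idempotents_eq_UNIV)
next
  assume rank_two: "2 \<le> mat_rank P \<and> (2::'a) \<noteq> 0"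
  then obtain w e u v where "pairing P w e = 1" "pairing P w u = 0" "pairing P v e = 0" "pairing P v u \<noteq> 0"
    using nondegenerate_frame_if_mat_rank_ge_2 by blast
  with rank_two show "jordan_span P = UNIV"
    by (intro jordan_span_eq_UNIV) blast+
qed

end
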